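(* Let $G$ be a finite group and $p$ a prime dividing $|G|$. If $\mathcal{O}_p(G)\neq1$, then the finite spaces $\mathcal{S}_p(G)'/G$ and $\mathcal{B}_p(G)'/G$ are contractible.
   Context: $\mathcal{O}_p(G)$ is the largest normal $p$-subgroup of $G$. $\mathcal{S}_p(G)$ is the poset of non-trivial $p$-subgroups of $G$; $\mathcal{B}_p(G)=\{P\in\mathcal{S}_p(G):P=\mathcal{O}_p(N_G(P))\}$. $G$ acts by conjugation. For a poset $X$, $X'$ is the poset of non-empty chains ordered by inclusion with componentwise $G$-action, and $X'/G$ is the orbit poset ($\overline{c}\le\overline{d}$ iff some representatives satisfy $c_1\subseteq d_1$). Finite posets are finite $T_0$ spaces whose open sets are the down-sets. *)

theory Defs
  imports "HOL-Analysis.Analysis" "HOL-Algebra.Group_Action"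
begin

definition p_subgroup :: "('a, 'b) monoid_scheme \<Rightarrow> nat \<Rightarrow> 'a set \<Rightarrow> bool" where
  "p_subgroup G p P \<longleftrightarrow> subgroup P G \<and> (\<exists>n. card P = p ^ n)"

definition Op :: "('a, 'b) monoid_scheme \<Rightarrow> nat \<Rightarrow> 'a set" where
  "Op G p = (THE Q. p_subgroup G p Q \<and> Q \<lhd> G \<and>
                 (\<forall>Q'. p_subgroup G p Q' \<and> Q' \<lhd> G \<longrightarrow> Q' \<subseteq> Q))"

definition Sp :: "('a, 'b) monoid_scheme \<Rightarrow> nat \<Rightarrow> 'a set set" where
  "Sp G p = {P. p_subgroup G p P \<and> P \<noteq> {\<one>\<^bsub>G\<^esub>}}"

definition Bp :: "('a, 'b) monoid_scheme \<Rightarrow> nat \<Rightarrow> 'a set set" where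
  "Bp G p = {P \<in> Sp G p. P = Op (G\<lparr>carrier := normalizer G P\<rparr>) p}"

definition conj_set :: "('a, 'b) monoid_scheme \<Rightarrow> 'a \<Rightarrow> 'a set \<Rightarrow> 'a set" where
  "conj_set G g P = g <#\<^bsub>G\<^esub> P #>\<^bsub>G\<^esub> inv\<^bsub>G\<^esub> g"

definition chains_poset :: "'c set set \<Rightarrow> 'c set set set" where
  "chains_poset X = {c. c \<noteq> {} \<and> c \<subseteq> X \<and> (\<forall>a\<in>c. \<forall>b\<in>c. a \<subseteq> b \<or> b \<subseteq> a)}"

definition chain_action :: "('a, 'b) monoid_scheme \<Rightarrow> 'a \<Rightarrow> 'a set set \<Rightarrow> 'a set set" where
  "chain_action G g c = conj_set G g ` c"

definition orbit_poset :: "('a, 'b) monoid_scheme \<Rightarrow> 'a set set \<Rightarrow> 'a set set set set" where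
  "orbit_poset G X = orbits G (chains_poset X) (chain_action G)"

definition orbit_le :: "'a set set set \<Rightarrow> 'a set set set \<Rightarrow> bool" where
  "orbit_le O1 O2 \<longleftrightarrow> (\<exists>c\<in>O1. \<exists>d\<in>O2. c \<subseteq> d)"

(* finite poset as a (finite T0) space: open sets are the down-sets *)
definition poset_topology :: "'c set \<Rightarrow> ('c \<Rightarrow> 'c \<Rightarrow> bool) \<Rightarrow> 'c topology" where
  "poset_topology X R = topology (\<lambda>U. U \<subseteq> X \<and> (\<forall>x\<in>U. \<forall>y\<in>X. R y x \<longrightarrow> y \<in> U))"

lemma istopology_poset: "istopology (\<lambda>U. U \<subseteq> X \<and> (\<forall>x\<in>U. \<forall>y\<in>X. R y x \<longrightarrow> y \<in> U))"
  unfolding istopology_def by blast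

lemma openin_poset_topology:
  "openin (poset_topology X R) U \<longleftrightarrow> U \<subseteq> X \<and> (\<forall>x\<in>U. \<forall>y\<in>X. R y x \<longrightarrow> y \<in> U)"
  unfolding poset_topology_def by (simp add: topology_inverse'[OF istopology_poset])

end

(*
  Let N = O_p(G) \<noteq> 1. A monotone, conjugation-equivariant self-map f of a family S of subgroups
  induces a map of X'/G; two such maps f, g are homotopic there as soon as f P and g Q are
  comparable for all comparable P, Q, since c \<mapsto> f c \<union> g c is then again a chain and lies above
  both, and comparable maps of a finite space are homotopic.

  Every member of B_p(G) contains N, so on B_p(G) this connects the identity to the constant map N.
  On S_p(G) the map P \<mapsto> NP is connected to the constant map N, and to the identity through the
  maps that replace P by NP only when |P| \<ge> k.
*)

theory Submission
  imports Defs "HOL-Algebra.Zassenhaus" "HOL-Algebra.SndIsomorphismGrp"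
begin

section \<open>Finite posets as spaces\<close>

lemma topspace_poset_topology [simp]: "topspace (poset_topology X R) = X"
  unfolding topspace_def openin_poset_topology by blast

lemma continuous_map_poset_topology:
  assumes "f ` X \<subseteq> Y" and "\<And>x y. x \<in> X \<Longrightarrow> y \<in> X \<Longrightarrow> R x y \<Longrightarrow> S (f x) (f y)"
  shows "continuous_map (poset_topology X R) (poset_topology Y S) f"
  using assms unfolding continuous_map_def openin_poset_topology by auto

text \<open>The homotopy is \<open>f\<close> before time \<open>1\<close> and \<open>g\<close> at time \<open>1\<close>; it is continuous because the
  preimage of a down-set under \<open>g\<close> lies in its preimage under \<open>f\<close>.\<close>

lemma homotopic_with_poset_topology:
  assumes f: "f ` X \<subseteq> Y" "\<And>x y. x \<in> X \<Longrightarrow> y \<in> X \<Longrightarrow> R x y \<Longrightarrow> S (f x) (f y)"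
    and g: "g ` X \<subseteq> Y" "\<And>x y. x \<in> X \<Longrightarrow> y \<in> X \<Longrightarrow> R x y \<Longrightarrow> S (g x) (g y)"
    and fg: "\<And>x. x \<in> X \<Longrightarrow> S (f x) (g x)"
  shows "homotopic_with (\<lambda>_. True) (poset_topology X R) (poset_topology Y S) f g"
proof -
  define h where "h = (\<lambda>(t::real, x). if t = 1 then g x else f x)"
  let ?I = "top_of_set {0..1::real}"
  have "continuous_map (prod_topology ?I (poset_topology X R)) (poset_topology Y S) h"
    unfolding continuous_map_def
  proof (intro conjI allI impI)
    show "h \<in> topspace (prod_topology ?I (poset_topology X R)) \<rightarrow> topspace (poset_topology Y S)"
      using f g by (auto simp: h_def image_subset_iff)
  next
    fix U assume U: "openin (poset_topology Y S) U"
    have "{z \<in> topspace (prod_topology ?I (poset_topology X R)). h z \<in> U}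
        = {0..<1} \<times> {x \<in> X. f x \<in> U} \<union> {0..1} \<times> {x \<in> X. g x \<in> U}"
      using U f g fg by (auto simp: h_def openin_poset_topology split: if_splits)
    moreover have "openin ?I {0..<1}"
      unfolding openin_open by (rule exI[of _ "{..<1}"]) auto
    moreover have "openin (poset_topology X R) {x \<in> X. f x \<in> U}"
      "openin (poset_topology X R) {x \<in> X. g x \<in> U}"
      using U continuous_map_poset_topology[of f X Y R S] continuous_map_poset_topology[of g X Y R S]
        f g unfolding continuous_map_def by auto
    ultimately show "openin (prod_topology ?I (poset_topology X R))
        {z \<in> topspace (prod_topology ?I (poset_topology X R)). h z \<in> U}"
      by (auto intro!: openin_Un openin_prod_Times_iff[THEN iffD2])
  qed
  then show ?thesis
    unfolding homotopic_with_def by (intro exI[of _ h]) (auto simp: h_def)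
qed

section \<open>Maps of orbit posets of chains\<close>

abbreviation orbit_space :: "('a, 'b) monoid_scheme \<Rightarrow> 'a set set \<Rightarrow> 'a set set set topology" where
  "orbit_space G S \<equiv> poset_topology (orbit_poset G S) orbit_le"

definition equivariant_chain_map ::
    "('a, 'b) monoid_scheme \<Rightarrow> 'a set set \<Rightarrow> ('a set set \<Rightarrow> 'a set set) \<Rightarrow> bool" where
  "equivariant_chain_map G S F \<longleftrightarrow> mono F \<and> (\<forall>c \<in> chains_poset S. F c \<in> chains_poset S) \<and>
     (\<forall>g \<in> carrier G. \<forall>c \<in> chains_poset S. F (chain_action G g c) = chain_action G g (F c))"

definition equivariant_poset_map ::
    "('a, 'b) monoid_scheme \<Rightarrow> 'a set set \<Rightarrow> ('a set \<Rightarrow> 'a set) \<Rightarrow> bool" where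
  "equivariant_poset_map G S f \<longleftrightarrow> f ` S \<subseteq> S \<and> (\<forall>P \<in> S. \<forall>Q \<in> S. P \<subseteq> Q \<longrightarrow> f P \<subseteq> f Q) \<and>
     (\<forall>g \<in> carrier G. \<forall>P \<in> S. f (conj_set G g P) = conj_set G g (f P))"

lemma equivariant_poset_mapI:
  assumes "\<And>P. P \<in> S \<Longrightarrow> f P \<in> S"
    and "\<And>P Q. P \<in> S \<Longrightarrow> Q \<in> S \<Longrightarrow> P \<subseteq> Q \<Longrightarrow> f P \<subseteq> f Q"
    and "\<And>g P. g \<in> carrier G \<Longrightarrow> P \<in> S \<Longrightarrow> f (conj_set G g P) = conj_set G g (f P)"
  shows "equivariant_poset_map G S f"
  unfolding equivariant_poset_map_def image_subset_iff using assms by simp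

lemma equivariant_poset_mapD:
  assumes "equivariant_poset_map G S f"
  shows "P \<in> S \<Longrightarrow> f P \<in> S"
    and "P \<in> S \<Longrightarrow> Q \<in> S \<Longrightarrow> P \<subseteq> Q \<Longrightarrow> f P \<subseteq> f Q"
    and "g \<in> carrier G \<Longrightarrow> P \<in> S \<Longrightarrow> f (conj_set G g P) = conj_set G g (f P)"
  using assms unfolding equivariant_poset_map_def by auto

lemma image_in_orbit_poset:
  assumes F: "equivariant_chain_map G S F" and Ob: "Ob \<in> orbit_poset G S"
  shows "F ` Ob \<in> orbit_poset G S"
proof -
  obtain c where c: "c \<in> chains_poset S" and Ob_eq: "Ob = orbit G (chain_action G) c"
    using Ob unfolding orbit_poset_def orbits_def by auto
  have "F ` Ob = orbit G (chain_action G) (F c)"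
    using F c unfolding Ob_eq orbit_def equivariant_chain_map_def by force
  moreover have "F c \<in> chains_poset S"
    using F c unfolding equivariant_chain_map_def by blast
  ultimately show ?thesis
    unfolding orbit_poset_def orbits_def by blast
qed

lemma orbit_poset_nonempty:
  assumes "group G" and "Ob \<in> orbit_poset G S"
  shows "Ob \<noteq> {}"
proof -
  obtain c where "Ob = orbit G (chain_action G) c"
    using assms(2) unfolding orbit_poset_def orbits_def by blast
  then have "chain_action G \<one>\<^bsub>G\<^esub> c \<in> Ob"
    using monoid.one_closed[OF group.is_monoid[OF assms(1)]] unfolding orbit_def by blast
  then show ?thesis by blast
qed

lemma orbit_poset_chain_nonempty:
  assumes "Ob \<in> orbit_poset G S" and "c \<in> Ob"
  shows "c \<noteq> {}"
proof -
  obtain d g where "d \<in> chains_poset S" and "c = chain_action G g d"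
    using assms unfolding orbit_poset_def orbits_def orbit_def by blast
  then show ?thesis
    unfolding chains_poset_def chain_action_def by blast
qed

lemma orbit_poset_memberD:
  assumes "Ob \<in> orbit_poset G S" and "c \<in> Ob" and "X \<in> c"
  shows "\<exists>g \<in> carrier G. \<exists>P \<in> S. X = conj_set G g P"
proof -
  obtain d g where "d \<in> chains_poset S" "g \<in> carrier G" "c = chain_action G g d"
    using assms(1,2) unfolding orbit_poset_def orbits_def orbit_def by blast
  then show ?thesis
    using assms(3) unfolding chains_poset_def chain_action_def by blast
qed

lemma homotopic_with_orbit_space:
  assumes "group G" and F: "equivariant_chain_map G S F" and H: "equivariant_chain_map G S H"
    and FH: "\<And>c. F c \<subseteq> H c"
  shows "homotopic_with (\<lambda>_. True) (orbit_space G S) (orbit_space G S) (image F) (image H)"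
proof (rule homotopic_with_poset_topology)
  have "mono F" "mono H"
    using F H unfolding equivariant_chain_map_def by blast+
  then show "orbit_le (F ` Ob) (F ` Ob')" "orbit_le (H ` Ob) (H ` Ob')"
    if "orbit_le Ob Ob'" for Ob Ob'
    using that unfolding orbit_le_def by (meson image_eqI monoD)+
  show "image F ` orbit_poset G S \<subseteq> orbit_poset G S" "image H ` orbit_poset G S \<subseteq> orbit_poset G S"
    using image_in_orbit_poset[OF F] image_in_orbit_poset[OF H] by blast+
  show "orbit_le (F ` Ob) (H ` Ob)" if Ob: "Ob \<in> orbit_poset G S" for Ob
  proof -
    obtain c where "c \<in> Ob"
      using orbit_poset_nonempty[OF \<open>group G\<close> Ob] by blast
    then show ?thesis
      unfolding orbit_le_def using FH[of c] by blast
  qed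
qed

lemma equivariant_chain_map_image_Un:
  assumes f: "equivariant_poset_map G S f" and g: "equivariant_poset_map G S g"
    and fg: "\<forall>P \<in> S. \<forall>Q \<in> S. P \<subseteq> Q \<or> Q \<subseteq> P \<longrightarrow> f P \<subseteq> g Q \<or> g Q \<subseteq> f P"
  shows "equivariant_chain_map G S (\<lambda>c. f ` c \<union> g ` c)"
proof -
  note mono_f = equivariant_poset_mapD(2)[OF f] and mono_g = equivariant_poset_mapD(2)[OF g]
  have comparable: "a \<subseteq> b \<or> b \<subseteq> a"
    if c: "c \<in> chains_poset S" and ab: "a \<in> f ` c \<union> g ` c" "b \<in> f ` c \<union> g ` c" for a b c
  proof -
    obtain P Q where in_c: "P \<in> c" "Q \<in> c" and a: "a = f P \<or> a = g P" and b: "b = f Q \<or> b = g Q"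
      using ab by blast
    have S: "P \<in> S" "Q \<in> S" and PQ: "P \<subseteq> Q \<or> Q \<subseteq> P"
      using c in_c unfolding chains_poset_def by blast+
    have "f P \<subseteq> f Q \<or> f Q \<subseteq> f P" "g P \<subseteq> g Q \<or> g Q \<subseteq> g P"
      using PQ mono_f[OF S] mono_f[OF S(2,1)] mono_g[OF S] mono_g[OF S(2,1)] by blast+
    moreover have "f P \<subseteq> g Q \<or> g Q \<subseteq> f P" "f Q \<subseteq> g P \<or> g P \<subseteq> f Q"
      using fg[rule_format, OF S] fg[rule_format, OF S(2,1)] PQ by blast+
    ultimately show ?thesis
      using a b by blast
  qed
  have "f ` c \<union> g ` c \<in> chains_poset S" if c: "c \<in> chains_poset S" for c
  proof -
    have "c \<noteq> {}" "c \<subseteq> S"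
      using c unfolding chains_poset_def by blast+
    then have "f ` c \<union> g ` c \<noteq> {}" "f ` c \<union> g ` c \<subseteq> S"
      using equivariant_poset_mapD(1)[OF f] equivariant_poset_mapD(1)[OF g] by blast+
    with comparable[OF c] show ?thesis
      unfolding chains_poset_def by blast
  qed
  moreover have "f ` chain_action G x c \<union> g ` chain_action G x c = chain_action G x (f ` c \<union> g ` c)"
    if "x \<in> carrier G" and c: "c \<in> chains_poset S" for x c
  proof -
    have "c \<subseteq> S"
      using c unfolding chains_poset_def by blast
    then have "(\<lambda>P. h (conj_set G x P)) ` c = (\<lambda>P. conj_set G x (h P)) ` c"
      if "equivariant_poset_map G S h" for h
      using equivariant_poset_mapD(3)[OF that \<open>x \<in> carrier G\<close>] by (intro image_cong) auto
    then show ?thesis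
      unfolding chain_action_def image_Un image_image using f g by presburger
  qed
  moreover have "mono (\<lambda>c. f ` c \<union> g ` c)"
    by (intro monoI Un_mono image_mono)
  ultimately show ?thesis
    unfolding equivariant_chain_map_def by blast
qed

lemma homotopic_with_orbit_space_induced:
  assumes "group G" and f: "equivariant_poset_map G S f" and g: "equivariant_poset_map G S g"
    and fg: "\<forall>P \<in> S. \<forall>Q \<in> S. P \<subseteq> Q \<or> Q \<subseteq> P \<longrightarrow> f P \<subseteq> g Q \<or> g Q \<subseteq> f P"
  shows "homotopic_with (\<lambda>_. True) (orbit_space G S) (orbit_space G S)
           (image (image f)) (image (image g))"
proof -
  have induced: "equivariant_chain_map G S (image h)" if h: "equivariant_poset_map G S h" for h
  proof -
    have "\<forall>P \<in> S. \<forall>Q \<in> S. P \<subseteq> Q \<or> Q \<subseteq> P \<longrightarrow> h P \<subseteq> h Q \<or> h Q \<subseteq> h P"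
      using equivariant_poset_mapD(2)[OF h] by blast
    from equivariant_chain_map_image_Un[OF h h this] show ?thesis
      by simp
  qed
  have union: "equivariant_chain_map G S (\<lambda>c. f ` c \<union> g ` c)"
    using equivariant_chain_map_image_Un[OF f g fg] .
  have f_union: "homotopic_with (\<lambda>_. True) (orbit_space G S) (orbit_space G S)
      (image (image f)) (image (\<lambda>c. f ` c \<union> g ` c))"
    using homotopic_with_orbit_space[OF \<open>group G\<close> induced[OF f] union Un_upper1] .
  have g_union: "homotopic_with (\<lambda>_. True) (orbit_space G S) (orbit_space G S)
      (image (image g)) (image (\<lambda>c. f ` c \<union> g ` c))"
    using homotopic_with_orbit_space[OF \<open>group G\<close> induced[OF g] union Un_upper2] .
  show ?thesis
    using homotopic_with_trans[OF f_union homotopic_with_symD[OF g_union]] .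
qed

lemma contractible_orbit_space:
  assumes "group G"
    and "homotopic_with (\<lambda>_. True) (orbit_space G S) (orbit_space G S) id (image (image (\<lambda>_. N)))"
  shows "contractible_space (orbit_space G S)"
proof -
  have const: "image (image (\<lambda>_. N)) Ob = {{N}}" if Ob: "Ob \<in> orbit_poset G S" for Ob
  proof -
    have "image (\<lambda>_. N) c = {N}" if "c \<in> Ob" for c
      using orbit_poset_chain_nonempty[OF Ob that] by (simp add: image_constant_conv)
    then have "image (image (\<lambda>_. N)) Ob = image (\<lambda>_. {N}) Ob"
      by (rule image_cong[OF refl])
    then show ?thesis
      using orbit_poset_nonempty[OF \<open>group G\<close> Ob] by (simp add: image_constant_conv)
  qed
  have "homotopic_with (\<lambda>_. True) (orbit_space G S) (orbit_space G S) id (\<lambda>_. {{N}})"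
    by (rule homotopic_with_eq[OF assms(2)]) (simp_all add: const)
  then show ?thesis
    unfolding contractible_space_def by blast
qed

section \<open>\<open>p\<close>-subgroups\<close>

lemma (in group) prime_power_card_subgroup:
  assumes "prime p" and "order G = p ^ n" and "subgroup H G"
  shows "\<exists>i. card H = p ^ i" and "\<exists>j. card (rcosets H) = p ^ j"
  using lagrange[OF assms(3)] divides_primepow_nat[OF assms(1)] assms(2)
  by (metis dvd_triv_right, metis dvd_triv_left)

lemma (in group) subset_set_mult_normal:
  assumes "N \<lhd> G" and "subgroup P G"
  shows "N \<subseteq> N <#> P" and "P \<subseteq> N <#> P"
proof -
  interpret second_isomorphism_grp N G P
    using assms unfolding second_isomorphism_grp_def second_isomorphism_grp_axioms_def by blast
  show "N \<subseteq> N <#> P" "P \<subseteq> N <#> P"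
    by (fact H_contained_in_set_mult S_contained_in_set_mult)+
qed

text \<open>By the second isomorphism theorem, \<open>NP/N \<cong> P/(N \<inter> P)\<close>.\<close>

lemma (in group) p_subgroup_set_mult_normal:
  assumes "prime p" and "N \<lhd> G" and N: "p_subgroup G p N" and P: "p_subgroup G p P"
  shows "p_subgroup G p (N <#> P)"
proof -
  have "subgroup P G"
    using P unfolding p_subgroup_def by blast
  interpret second_isomorphism_grp N G P
    using assms \<open>subgroup P G\<close>
    unfolding second_isomorphism_grp_def second_isomorphism_grp_axioms_def by blast
  interpret GP: group "G\<lparr>carrier := P\<rparr>"
    using \<open>subgroup P G\<close> by (rule subgroup_imp_group)
  interpret GNP: group "G\<lparr>carrier := N <#> P\<rparr>"
    using normal_set_mult_subgroup by (rule subgroup_imp_group)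
  obtain a b where a: "card N = p ^ a" and b: "card P = p ^ b"
    using N P unfolding p_subgroup_def by blast
  have "subgroup (N \<inter> P) (G\<lparr>carrier := P\<rparr>)"
    using normal_subgrp_intersection_normal normal_imp_subgroup by (metis Int_commute)
  then obtain j where j: "card (rcosets\<^bsub>G\<lparr>carrier := P\<rparr>\<^esub> (N \<inter> P)) = p ^ j"
    using GP.prime_power_card_subgroup(2)[OF \<open>prime p\<close>] b by (auto simp: order_def)
  have "card (rcosets\<^bsub>G\<lparr>carrier := P\<rparr>\<^esub> (N \<inter> P)) = card (rcosets\<^bsub>G\<lparr>carrier := N <#> P\<rparr>\<^esub> N)"
    using normal_intersection_quotient_isom
    unfolding iso_def FactGroup_def by (auto intro: bij_betw_same_card)
  moreover have "card (rcosets\<^bsub>G\<lparr>carrier := N <#> P\<rparr>\<^esub> N) * card N = card (N <#> P)"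
    using GNP.lagrange normal_in_normal_set_mult[OF assms(2) \<open>subgroup P G\<close>] normal_imp_subgroup
    by (fastforce simp: order_def)
  ultimately have "card (N <#> P) = p ^ (j + a)"
    using j a by (simp add: power_add)
  then show ?thesis
    using normal_set_mult_subgroup unfolding p_subgroup_def by blast
qed

lemma (in group) ex1_largest_normal_p_subgroup:
  assumes "finite (carrier G)" and "prime p"
  shows "\<exists>!Q. p_subgroup G p Q \<and> Q \<lhd> G \<and> (\<forall>Q'. p_subgroup G p Q' \<and> Q' \<lhd> G \<longrightarrow> Q' \<subseteq> Q)"
proof -
  define A where "A = {Q. p_subgroup G p Q \<and> Q \<lhd> G}"
  have "finite A"
    using assms(1) unfolding A_def p_subgroup_def
    by (auto intro: finite_subset[of _ "Pow (carrier G)"] dest: subgroup.subset)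
  moreover have "{\<one>} \<in> A"
    unfolding A_def p_subgroup_def using one_is_normal triv_subgroup by (auto intro: exI[of _ 0])
  ultimately obtain M where M: "M \<in> A" and maximal: "\<And>Q. Q \<in> A \<Longrightarrow> M \<subseteq> Q \<Longrightarrow> M = Q"
    using finite_has_maximal by (metis empty_iff)
  have "Q \<subseteq> M" if "Q \<in> A" for Q
  proof -
    have "M <#> Q \<in> A"
      using M that p_subgroup_set_mult_normal[OF assms(2)] normal_subgroup_set_mult_closed
      unfolding A_def by blast
    moreover have "M \<subseteq> M <#> Q" "Q \<subseteq> M <#> Q"
      using M that subset_set_mult_normal normal_imp_subgroup unfolding A_def by blast+
    ultimately show ?thesis
      using maximal by blast
  qed
  then show ?thesis
    using M unfolding A_def by (metis (no_types, lifting) mem_Collect_eq subset_antisym)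
qed

lemma
  assumes "group G" and "finite (carrier G)" and "prime p"
  shows p_subgroup_Op: "p_subgroup G p (Op G p)"
    and normal_Op: "Op G p \<lhd> G"
    and subset_Op: "p_subgroup G p Q \<Longrightarrow> Q \<lhd> G \<Longrightarrow> Q \<subseteq> Op G p"
  using theI'[OF group.ex1_largest_normal_p_subgroup[OF assms]] unfolding Op_def by blast+

lemma (in group) conj_set_eq_image:
  assumes "P \<subseteq> carrier G" and "g \<in> carrier G"
  shows "conj_set G g P = (\<lambda>h. g \<otimes> h \<otimes> inv g) ` P"
  unfolding conj_set_def l_coset_def r_coset_def by auto

lemma (in group) card_conj_set:
  assumes "P \<subseteq> carrier G" and "g \<in> carrier G"
  shows "card (conj_set G g P) = card P"
proof -
  have "inj_on (\<lambda>h. g \<otimes> h \<otimes> inv g) P"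
  proof (rule inj_onI)
    fix x y assume "x \<in> P" "y \<in> P" "g \<otimes> x \<otimes> inv g = g \<otimes> y \<otimes> inv g"
    moreover have "x \<in> carrier G" "y \<in> carrier G"
      using \<open>x \<in> P\<close> \<open>y \<in> P\<close> assms(1) by blast+
    ultimately show "x = y"
      using assms(2) by simp
  qed
  then show ?thesis
    using assms by (simp add: conj_set_eq_image card_image)
qed

lemma (in group) conj_set_normal:
  assumes "N \<lhd> G" and "g \<in> carrier G"
  shows "conj_set G g N = N"
  using assms normal.coset_eq[OF assms(1)] coset_mult_assoc[of N g "inv g"]
  unfolding conj_set_def by (simp add: normal_imp_subgroup subgroup.subset)

lemma (in group) conj_set_set_mult_normal:
  assumes "N \<lhd> G" and "P \<subseteq> carrier G" and "g \<in> carrier G"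
  shows "conj_set G g (N <#> P) = N <#> conj_set G g P"
proof -
  have N: "N \<subseteq> carrier G"
    using assms(1) normal_imp_subgroup subgroup.subset by blast
  have "g <# (N <#> P) = (N #> g) <#> P"
    using assms N by (simp add: l_coset_eq_set_mult set_mult_assoc normal.coset_eq)
  also have "\<dots> = N <#> (g <# P)"
    using assms N by (simp add: rcos_assoc_lcos)
  finally show ?thesis
    using assms N unfolding conj_set_def by (simp add: setmult_rcos_assoc l_coset_subset_G)
qed

lemma (in group) mem_normalizer_iff:
  assumes "P \<subseteq> carrier G"
  shows "y \<in> normalizer G P \<longleftrightarrow> y \<in> carrier G \<and> conj_set G y P = P"
  using assms unfolding normalizer_def stabilizer_def conj_set_def by auto

lemma (in group_action) prime_dvd_card_non_fixed_points:
  assumes "prime p" and "order G = p ^ n" and "finite A" and "A \<subseteq> E"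
    and invariant: "\<And>g x. g \<in> carrier G \<Longrightarrow> x \<in> A \<Longrightarrow> \<phi> g x \<in> A"
  shows "p dvd card {x \<in> A. \<exists>g \<in> carrier G. \<phi> g x \<noteq> x}"
proof -
  interpret group G
    using group_hom group_hom.axioms(1) by blast
  define B where "B = {x \<in> A. \<exists>g \<in> carrier G. \<phi> g x \<noteq> x}"
  have B: "B \<subseteq> E" "finite B"
    using assms(3,4) unfolding B_def by auto
  have orbit_B: "orbit G \<phi> x \<subseteq> B" if x: "x \<in> B" for x
  proof
    fix y assume "y \<in> orbit G \<phi> x"
    then obtain g where g: "g \<in> carrier G" "\<phi> g x = y"
      unfolding orbit_def by blast
    then have "\<phi> (inv g) y = x"
      using orbit_sym_aux x B(1) by blast
    moreover obtain h where "h \<in> carrier G" "\<phi> h x \<noteq> x"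
      using x unfolding B_def by blast
    ultimately have "\<exists>h \<in> carrier G. \<phi> h y \<noteq> y"
      using g(1) by (cases "x = y") auto
    then show "y \<in> B"
      using invariant g x unfolding B_def by blast
  qed
  have "p dvd card (orbit G \<phi> x)" if x: "x \<in> B" for x
  proof -
    have "x \<in> E"
      using x B(1) by blast
    then obtain k where k: "card (orbit G \<phi> x) = p ^ k"
      using orbit_stabilizer_theorem assms(2) divides_primepow_nat[OF assms(1)]
      by (metis dvd_triv_left)
    obtain g where "g \<in> carrier G" "\<phi> g x \<noteq> x"
      using x unfolding B_def by blast
    moreover have "x \<in> orbit G \<phi> x"
      using orbit_refl[OF \<open>x \<in> E\<close>] .
    ultimately have "card {x, \<phi> g x} \<le> card (orbit G \<phi> x)"
      using orbit_B[OF x] B(2) by (intro card_mono) (auto simp: orbit_def intro: finite_subset)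
    then have "k \<noteq> 0"
      using k \<open>\<phi> g x \<noteq> x\<close> by (cases k) auto
    then show ?thesis
      using k by (simp add: dvd_power)
  qed
  moreover have "B = \<Union> (orbit G \<phi> ` B)"
    using orbit_B orbit_refl B(1) by blast
  moreover have "pairwise disjnt (orbit G \<phi> ` B)"
    using disjoint_union B(1) unfolding pairwise_def disjnt_def orbits_def by blast
  moreover have "finite Orb" if "Orb \<in> orbit G \<phi> ` B" for Orb
    using that orbit_B B(2) finite_subset by blast
  ultimately have "p dvd card B"
    by (metis card_Union_disjoint dvd_sum imageE)
  then show ?thesis
    unfolding B_def .
qed

lemma (in group) conj_set_rcos:
  assumes "subgroup P G" and "g \<in> P" and "y \<in> carrier G"
  shows "conj_set G g (P #> y) = P #> (y \<otimes> inv g)"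
proof -
  have g: "g \<in> carrier G" and P: "P \<subseteq> carrier G"
    using subgroup.mem_carrier[OF assms(1,2)] subgroup.subset[OF assms(1)] .
  then have "conj_set G g (P #> y) = ((g <# P) #> y) #> inv g"
    unfolding conj_set_def using assms(3) by (simp add: coset_assoc)
  also have "\<dots> = P #> (y \<otimes> inv g)"
    using assms g P by (simp add: coset_join3 coset_mult_assoc)
  finally show ?thesis .
qed

lemma (in group) mem_normalizer_if_fixes_rcos:
  assumes P: "subgroup P G" and "finite P" and y: "y \<in> carrier G"
    and fixed: "\<And>g. g \<in> P \<Longrightarrow> conj_set G g (P #> y) = P #> y"
  shows "y \<in> normalizer G P"
proof -
  have P_carrier: "P \<subseteq> carrier G"
    using P by (rule subgroup.subset)
  have "y \<otimes> h \<otimes> inv y \<in> P" if h: "h \<in> P" for h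
  proof -
    have h_carrier: "h \<in> carrier G" and "inv h \<in> P"
      using h P_carrier subgroup.m_inv_closed[OF P h] by blast+
    have "P #> (y \<otimes> h) = conj_set G (inv h) (P #> y)"
      using conj_set_rcos[OF P \<open>inv h \<in> P\<close> y] h_carrier by simp
    also have "\<dots> = P #> y"
      using fixed[OF \<open>inv h \<in> P\<close>] .
    finally have "y \<otimes> h \<in> P #> y"
      using rcos_self[OF m_closed[OF y h_carrier] P] by simp
    then obtain q where q: "q \<in> P" "y \<otimes> h = q \<otimes> y"
      unfolding r_coset_def by blast
    moreover have "q \<in> carrier G"
      using q(1) P_carrier by blast
    ultimately have "y \<otimes> h \<otimes> inv y = q"
      using y by (simp add: m_assoc)
    then show ?thesis
      using q(1) by simp
  qed
  then have "conj_set G y P \<subseteq> P"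
    using conj_set_eq_image[OF P_carrier y] by auto
  then have "conj_set G y P = P"
    using card_subset_eq[OF \<open>finite P\<close>] card_conj_set[OF P_carrier y] by simp
  then show ?thesis
    using y mem_normalizer_iff[OF P_carrier] by simp
qed

text \<open>\<open>P\<close> acts by conjugation on the \<open>p\<^sup>j\<close>, \<open>j > 0\<close>, right cosets of \<open>P\<close> in \<open>Q\<close>, and the non-fixed
  cosets are \<open>0\<close> modulo \<open>p\<close>.\<close>

lemma (in group) prime_dvd_card_fixed_rcosets:
  assumes "prime p" and Q: "p_subgroup G p Q" and P: "subgroup P G" and "P \<subset> Q"
  shows "p dvd card {X \<in> {P #> y | y. y \<in> Q}. \<forall>g \<in> P. conj_set G g X = X}"
proof -
  define A where "A = {P #> y | y. y \<in> Q}"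
  have "subgroup Q G"
    using Q unfolding p_subgroup_def by blast
  then have P_carrier: "P \<subseteq> carrier G" and Q_carrier: "Q \<subseteq> carrier G"
    using P subgroup.subset by blast+
  interpret GQ: group "G\<lparr>carrier := Q\<rparr>"
    using \<open>subgroup Q G\<close> by (rule subgroup_imp_group)
  have P_Q: "subgroup P (G\<lparr>carrier := Q\<rparr>)"
    using subgroup_incl[OF P \<open>subgroup Q G\<close>] \<open>P \<subset> Q\<close> by blast
  obtain n where order_Q: "order (G\<lparr>carrier := Q\<rparr>) = p ^ n"
    using Q unfolding p_subgroup_def order_def by auto
  obtain m where card_P: "card P = p ^ m"
    using GQ.prime_power_card_subgroup(1)[OF \<open>prime p\<close> order_Q P_Q] by blast
  have rcosets_A: "rcosets\<^bsub>G\<lparr>carrier := Q\<rparr>\<^esub> P = A"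
    unfolding RCOSETS_def A_def r_coset_def by auto
  obtain j where "card A = p ^ j"
    using GQ.prime_power_card_subgroup(2)[OF \<open>prime p\<close> order_Q P_Q] rcosets_A by auto
  moreover have "finite Q"
    using Q \<open>prime p\<close> unfolding p_subgroup_def by (metis card.infinite not_prime_0 power_not_zero)
  then have "card P < card Q"
    using \<open>P \<subset> Q\<close> by (rule psubset_card_mono)
  then have "card A \<noteq> 1"
    using GQ.lagrange[OF P_Q] rcosets_A by (auto simp: order_def)
  ultimately have "p dvd card A"
    by (cases j) auto
  define \<phi> where "\<phi> = (\<lambda>g. \<lambda>H \<in> {H. H \<subseteq> carrier G}. g <# H #> inv g)"
  interpret action: group_action "G\<lparr>carrier := P\<rparr>" "{H. H \<subseteq> carrier G}" \<phi>
    unfolding \<phi>_def by (rule group_action.induced_action[OF action_by_conjugation_on_power_set P])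
  have A_carrier: "A \<subseteq> {H. H \<subseteq> carrier G}"
    using P_carrier Q_carrier unfolding A_def by (auto dest: r_coset_subset_G[THEN subsetD])
  then have \<phi>_A: "\<phi> g X = conj_set G g X" if "X \<in> A" for g X
    using that unfolding \<phi>_def conj_set_def by auto
  have "\<phi> g X \<in> A" if g: "g \<in> P" and X: "X \<in> A" for g X
  proof -
    obtain y where y: "y \<in> Q" "X = P #> y"
      using X unfolding A_def by blast
    have "\<phi> g X = P #> (y \<otimes> inv g)"
      using \<phi>_A[OF X] conj_set_rcos[OF P g] y Q_carrier by blast
    moreover have "y \<otimes> inv g \<in> Q"
      using subgroup.m_closed[OF \<open>subgroup Q G\<close> y(1) subgroup.m_inv_closed[OF \<open>subgroup Q G\<close>]] g
        \<open>P \<subset> Q\<close> by blast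
    ultimately show ?thesis
      unfolding A_def by blast
  qed
  moreover have "finite A"
    using \<open>finite Q\<close> unfolding A_def by simp
  moreover have "order (G\<lparr>carrier := P\<rparr>) = p ^ m"
    using card_P by (simp add: order_def)
  ultimately have "p dvd card {X \<in> A. \<exists>g \<in> carrier (G\<lparr>carrier := P\<rparr>). \<phi> g X \<noteq> X}"
    using action.prime_dvd_card_non_fixed_points[OF \<open>prime p\<close> _ _ A_carrier] by simp
  moreover have "{X \<in> A. \<exists>g \<in> carrier (G\<lparr>carrier := P\<rparr>). \<phi> g X \<noteq> X}
      = {X \<in> A. \<exists>g \<in> P. conj_set G g X \<noteq> X}"
    by (rule Collect_cong) (simp add: \<phi>_A cong: conj_cong)
  ultimately have "p dvd card {X \<in> A. \<exists>g \<in> P. conj_set G g X \<noteq> X}"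
    by simp
  moreover have "card A = card {X \<in> A. \<forall>g \<in> P. conj_set G g X = X}
      + card {X \<in> A. \<exists>g \<in> P. conj_set G g X \<noteq> X}"
    using \<open>finite A\<close> by (subst card_Un_disjoint[symmetric]) (auto intro: arg_cong[of _ _ card])
  ultimately show ?thesis
    using \<open>p dvd card A\<close> unfolding A_def by (simp add: dvd_add_left_iff)
qed

text \<open>Normalizers grow in \<open>p\<close>-groups: besides \<open>P\<close> itself, some other coset \<open>P #> y\<close> is fixed.\<close>

lemma (in group) p_subgroup_normalizer_grows:
  assumes "prime p" and Q: "p_subgroup G p Q" and P: "subgroup P G" and "P \<subset> Q"
  shows "\<exists>y \<in> Q - P. y \<in> normalizer G P"
proof -
  define F where "F = {X \<in> {P #> y | y. y \<in> Q}. \<forall>g \<in> P. conj_set G g X = X}"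
  have "subgroup Q G"
    using Q unfolding p_subgroup_def by blast
  then have P_carrier: "P \<subseteq> carrier G" and Q_carrier: "Q \<subseteq> carrier G"
    using P subgroup.subset by blast+
  have "p dvd card F"
    unfolding F_def using prime_dvd_card_fixed_rcosets[OF assms] .
  then have "F \<noteq> {P}"
    using \<open>prime p\<close> by auto
  moreover have "P \<in> F"
  proof -
    have "conj_set G g P = P" if g: "g \<in> P" for g
    proof -
      have "inv g \<in> P" "inv g \<in> carrier G"
        using subgroup.m_inv_closed[OF P g] P_carrier by blast+
      then show ?thesis
        using conj_set_rcos[OF P g one_closed] P_carrier by (simp add: coset_join2[OF _ P])
    qed
    moreover have "P = P #> \<one>"
      using P_carrier by simp
    ultimately show ?thesis
      unfolding F_def using subgroup.one_closed[OF \<open>subgroup Q G\<close>] by blast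
  qed
  ultimately obtain y where y: "y \<in> Q" "P #> y \<noteq> P" and fixed: "\<forall>g \<in> P. conj_set G g (P #> y) = P #> y"
    unfolding F_def by blast
  have "y \<in> carrier G"
    using y(1) Q_carrier by blast
  moreover have "finite P"
    using Q \<open>prime p\<close> \<open>P \<subset> Q\<close> unfolding p_subgroup_def
    by (metis card.infinite finite_subset not_prime_0 power_not_zero psubset_imp_subset)
  ultimately have "y \<in> normalizer G P"
    using mem_normalizer_if_fixes_rcos[OF P] fixed by blast
  moreover have "y \<notin> P"
    using y(2) coset_join2[OF \<open>y \<in> carrier G\<close> P] by blast
  ultimately show ?thesis
    using y(1) by blast
qed

section \<open>Contractibility\<close>

lemma (in group) set_mult_normal_in_Sp:
  assumes "prime p" and "N \<lhd> G" and "p_subgroup G p N" and P: "P \<in> Sp G p"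
  shows "N <#> P \<in> Sp G p"
proof -
  have "subgroup P G" "P \<noteq> {\<one>}"
    using P unfolding Sp_def p_subgroup_def by blast+
  then have "N <#> P \<noteq> {\<one>}"
    using subset_set_mult_normal(2)[OF assms(2)] subgroup.one_closed by blast
  then show ?thesis
    using p_subgroup_set_mult_normal assms unfolding Sp_def by blast
qed

text \<open>Lowering \<open>k\<close> from \<open>|G| + 1\<close> to \<open>0\<close> deforms the identity into \<open>P \<mapsto> NP\<close>; each single step keeps
  chains chains, whereas \<open>c \<mapsto> c \<union> {NP | P \<in> c}\<close> does not.\<close>

definition mult_above :: "('a, 'b) monoid_scheme \<Rightarrow> 'a set \<Rightarrow> nat \<Rightarrow> 'a set \<Rightarrow> 'a set" where
  "mult_above G N k P = (if k \<le> card P then N <#>\<^bsub>G\<^esub> P else P)"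

context
  fixes G :: "('a, 'b) monoid_scheme" (structure) and p :: nat and N :: "'a set"
  assumes G_group: "group G" and G_finite: "finite (carrier G)" and p_prime: "prime p"
    and N_normal: "N \<lhd> G" and N_p_subgroup: "p_subgroup G p N"
begin

interpretation group G
  by (rule G_group)

lemma SpD:
  assumes "P \<in> Sp G p"
  shows "subgroup P G" and "P \<subseteq> carrier G" and "finite P"
  using assms G_finite subgroup.subset finite_subset unfolding Sp_def p_subgroup_def by blast+

lemma subset_set_mult_Sp:
  assumes "P \<in> Sp G p"
  shows "N \<subseteq> N <#> P" and "P \<subseteq> N <#> P"
  using subset_set_mult_normal[OF N_normal SpD(1)[OF assms]] by blast+

lemma subset_mult_above:
  assumes "P \<in> Sp G p"
  shows "P \<subseteq> mult_above G N k P"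
  using subset_set_mult_Sp(2)[OF assms] unfolding mult_above_def by simp

lemma mult_above_Suc_subset:
  assumes "P \<in> Sp G p"
  shows "mult_above G N (Suc k) P \<subseteq> mult_above G N k P"
  using subset_set_mult_Sp(2)[OF assms] unfolding mult_above_def by auto

lemma equivariant_poset_map_mult_above:
  "equivariant_poset_map G (Sp G p) (mult_above G N k)"
proof (rule equivariant_poset_mapI)
  show "mult_above G N k P \<in> Sp G p" if "P \<in> Sp G p" for P
    using that set_mult_normal_in_Sp[OF p_prime N_normal N_p_subgroup] unfolding mult_above_def by simp
  show "mult_above G N k P \<subseteq> mult_above G N k Q"
    if "P \<in> Sp G p" "Q \<in> Sp G p" "P \<subseteq> Q" for P Q
  proof -
    have "card P \<le> card Q"
      using that SpD(3) card_mono by blast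
    moreover have "N <#> P \<subseteq> N <#> Q"
      using that(3) mono_set_mult by blast
    moreover have "P \<subseteq> N <#> Q"
      using that(3) subset_set_mult_Sp(2)[OF that(2)] by blast
    ultimately show ?thesis
      using that(3) unfolding mult_above_def by auto
  qed
  show "mult_above G N k (conj_set G g P) = conj_set G g (mult_above G N k P)"
    if "g \<in> carrier G" "P \<in> Sp G p" for g P
    using card_conj_set[OF SpD(2) that(1)] conj_set_set_mult_normal[OF N_normal SpD(2) that(1)] that(2)
    unfolding mult_above_def by simp
qed

lemma mult_above_comparable:
  assumes P: "P \<in> Sp G p" and Q: "Q \<in> Sp G p" and "P \<subseteq> Q \<or> Q \<subseteq> P"
  shows "mult_above G N (Suc k) P \<subseteq> mult_above G N k Q \<or> mult_above G N k Q \<subseteq> mult_above G N (Suc k) P"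
  using \<open>P \<subseteq> Q \<or> Q \<subseteq> P\<close>
proof
  assume "P \<subseteq> Q"
  then have "mult_above G N (Suc k) P \<subseteq> mult_above G N (Suc k) Q"
    using equivariant_poset_mapD(2)[OF equivariant_poset_map_mult_above P Q] by blast
  then show ?thesis
    using mult_above_Suc_subset[OF Q] by blast
next
  assume "Q \<subseteq> P"
  then have "card Q \<le> card P"
    using SpD(3)[OF P] card_mono by blast
  consider "Suc k \<le> card P" | "card Q < k" | "card Q = k" "card P = k"
    using \<open>card Q \<le> card P\<close> by linarith
  then show ?thesis
  proof cases
    case 1
    have "N <#> Q \<subseteq> N <#> P"
      using \<open>Q \<subseteq> P\<close> mono_set_mult by blast
    moreover have "Q \<subseteq> N <#> P"
      using \<open>Q \<subseteq> P\<close> subset_set_mult_Sp(2)[OF P] by blast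
    ultimately have "mult_above G N k Q \<subseteq> N <#> P"
      unfolding mult_above_def by simp
    moreover have "mult_above G N (Suc k) P = N <#> P"
      using 1 unfolding mult_above_def by simp
    ultimately show ?thesis
      by simp
  next
    case 2
    then have "mult_above G N k Q = Q"
      unfolding mult_above_def by simp
    then show ?thesis
      using \<open>Q \<subseteq> P\<close> subset_mult_above[OF P, of "Suc k"] by blast
  next
    case 3
    then have "Q = P"
      using card_subset_eq[OF SpD(3)[OF P] \<open>Q \<subseteq> P\<close>] by simp
    then show ?thesis
      using 3 subset_set_mult_Sp(2)[OF P] unfolding mult_above_def by auto
  qed
qed

lemma mult_above_eq_self:
  assumes "X \<subseteq> carrier G" and "card (carrier G) < k"
  shows "mult_above G N k X = X"
proof -
  have "card X \<le> card (carrier G)"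
    using card_mono[OF G_finite assms(1)] .
  then show ?thesis
    using assms(2) unfolding mult_above_def by simp
qed

lemma homotopic_mult_above_zero:
  "homotopic_with (\<lambda>_. True) (orbit_space G (Sp G p)) (orbit_space G (Sp G p))
     (image (image (mult_above G N k))) (image (image (mult_above G N 0)))"
proof (induction k)
  case 0
  have "\<forall>P \<in> Sp G p. \<forall>Q \<in> Sp G p. P \<subseteq> Q \<or> Q \<subseteq> P \<longrightarrow>
      mult_above G N 0 P \<subseteq> mult_above G N 0 Q \<or> mult_above G N 0 Q \<subseteq> mult_above G N 0 P"
    using equivariant_poset_mapD(2)[OF equivariant_poset_map_mult_above] by blast
  then show ?case
    by (rule homotopic_with_orbit_space_induced[OF G_group
          equivariant_poset_map_mult_above equivariant_poset_map_mult_above])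
next
  case (Suc k)
  have "\<forall>P \<in> Sp G p. \<forall>Q \<in> Sp G p. P \<subseteq> Q \<or> Q \<subseteq> P \<longrightarrow>
      mult_above G N (Suc k) P \<subseteq> mult_above G N k Q \<or> mult_above G N k Q \<subseteq> mult_above G N (Suc k) P"
    using mult_above_comparable by blast
  then have "homotopic_with (\<lambda>_. True) (orbit_space G (Sp G p)) (orbit_space G (Sp G p))
     (image (image (mult_above G N (Suc k)))) (image (image (mult_above G N k)))"
    by (rule homotopic_with_orbit_space_induced[OF G_group
          equivariant_poset_map_mult_above equivariant_poset_map_mult_above])
  then show ?case
    using Suc.IH by (rule homotopic_with_trans)
qed

lemma contractible_orbit_space_Sp:
  assumes "N \<noteq> {\<one>}"
  shows "contractible_space (orbit_space G (Sp G p))"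
proof (rule contractible_orbit_space[OF G_group])
  define K where "K = Suc (card (carrier G))"
  have id_K: "image (image (mult_above G N K)) Ob = id Ob" if Ob: "Ob \<in> orbit_poset G (Sp G p)" for Ob
  proof -
    have "mult_above G N K X = X" if c: "c \<in> Ob" and X: "X \<in> c" for c X
    proof -
      obtain g P where "g \<in> carrier G" "P \<in> Sp G p" "X = conj_set G g P"
        using orbit_poset_memberD[OF Ob c X] by blast
      then have "X \<subseteq> carrier G"
        using SpD(2) by (simp add: conj_set_def l_coset_subset_G r_coset_subset_G)
      then show ?thesis
        using mult_above_eq_self unfolding K_def by simp
    qed
    then show ?thesis
      by simp
  qed
  have id_zero: "homotopic_with (\<lambda>_. True) (orbit_space G (Sp G p)) (orbit_space G (Sp G p))
      id (image (image (mult_above G N 0)))"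
    by (rule homotopic_with_eq[OF homotopic_mult_above_zero[of K]]) (simp_all add: id_K)
  have "N \<in> Sp G p"
    using assms N_p_subgroup unfolding Sp_def by blast
  then have const: "equivariant_poset_map G (Sp G p) (\<lambda>_. N)"
    using conj_set_normal[OF N_normal] by (intro equivariant_poset_mapI) simp_all
  have "\<forall>P \<in> Sp G p. \<forall>Q \<in> Sp G p. P \<subseteq> Q \<or> Q \<subseteq> P \<longrightarrow>
      mult_above G N 0 P \<subseteq> N \<or> N \<subseteq> mult_above G N 0 P"
    using subset_set_mult_Sp(1) unfolding mult_above_def by simp
  then have zero_const: "homotopic_with (\<lambda>_. True) (orbit_space G (Sp G p)) (orbit_space G (Sp G p))
      (image (image (mult_above G N 0))) (image (image (\<lambda>_. N)))"
    by (rule homotopic_with_orbit_space_induced[OF G_group equivariant_poset_map_mult_above const])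
  show "homotopic_with (\<lambda>_. True) (orbit_space G (Sp G p)) (orbit_space G (Sp G p))
      id (image (image (\<lambda>_. N)))"
    using homotopic_with_trans[OF id_zero zero_const] .
qed

end

lemma (in group) Op_in_Bp:
  assumes "finite (carrier G)" and "prime p" and "Op G p \<noteq> {\<one>}"
  shows "Op G p \<in> Bp G p"
proof -
  have normal: "Op G p \<lhd> G" and "p_subgroup G p (Op G p)"
    using normal_Op p_subgroup_Op is_group assms(1,2) by blast+
  then have "Op G p \<subseteq> carrier G"
    using normal_imp_subgroup subgroup.subset by blast
  then have "normalizer G (Op G p) = carrier G"
    using mem_normalizer_iff conj_set_normal[OF normal] by auto
  then show ?thesis
    using \<open>p_subgroup G p (Op G p)\<close> assms(3) unfolding Bp_def Sp_def by simp
qed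

lemma (in group) normalizer_Int_Op_subset_Bp:
  assumes "finite (carrier G)" and "prime p" and P: "P \<in> Bp G p"
  shows "normalizer G P \<inter> Op G p \<subseteq> P"
proof -
  define K where "K = G\<lparr>carrier := normalizer G P\<rparr>"
  have N: "Op G p \<lhd> G" "p_subgroup G p (Op G p)"
    using normal_Op p_subgroup_Op is_group assms(1,2) by blast+
  have "P \<in> Sp G p" and P_Op: "P = Op K p"
    using P unfolding Bp_def K_def by blast+
  then have "P \<subseteq> carrier G"
    unfolding Sp_def p_subgroup_def using subgroup.subset by blast
  then have normalizer: "subgroup (normalizer G P) G"
    by (rule normalizer_imp_subgroup)
  interpret K: group K
    unfolding K_def using normalizer by (rule subgroup_imp_group)
  have "finite (carrier K)"
    unfolding K_def using finite_subset[OF subgroup.subset[OF normalizer] assms(1)] by simp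
  interpret second_isomorphism_grp "Op G p" G "normalizer G P"
    using N(1) normalizer unfolding second_isomorphism_grp_def second_isomorphism_grp_axioms_def
    by blast
  have normal: "normalizer G P \<inter> Op G p \<lhd> K"
    unfolding K_def by (rule normal_subgrp_intersection_normal)
  have "subgroup (Op G p) G"
    using N(1) by (rule normal_imp_subgroup)
  then have "subgroup (normalizer G P \<inter> Op G p) (G\<lparr>carrier := Op G p\<rparr>)"
    using subgroups_Inter_pair[OF normalizer] by (intro subgroup_incl) auto
  moreover obtain a where "order (G\<lparr>carrier := Op G p\<rparr>) = p ^ a"
    using N(2) unfolding p_subgroup_def order_def by auto
  ultimately obtain i where "card (normalizer G P \<inter> Op G p) = p ^ i"
    using group.prime_power_card_subgroup(1)[OF subgroup_imp_group[OF \<open>subgroup (Op G p) G\<close>]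
        \<open>prime p\<close>] by blast
  then have "p_subgroup K p (normalizer G P \<inter> Op G p)"
    using normal_imp_subgroup[OF normal] unfolding p_subgroup_def by blast
  then show ?thesis
    using subset_Op[OF K.is_group \<open>finite (carrier K)\<close> \<open>prime p\<close>] normal P_Op by blast
qed

text \<open>If \<open>P \<subset> NP\<close>, then \<open>P\<close> is normalized by some \<open>y = n x\<close> with \<open>n \<in> N\<close>, \<open>x \<in> P\<close>, \<open>y \<notin> P\<close>, as
  normalizers grow in the \<open>p\<close>-group \<open>NP\<close>; then \<open>n \<in> N\<^sub>G(P) \<inter> N \<subseteq> P\<close> gives \<open>y \<in> P\<close>.\<close>

lemma (in group) normal_p_subgroup_subset_if_normalizer_Int_subset:
  assumes "prime p" and N: "N \<lhd> G" "p_subgroup G p N" and P: "p_subgroup G p P"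
    and normalizer_Int: "normalizer G P \<inter> N \<subseteq> P"
  shows "N \<subseteq> P"
proof -
  have "subgroup P G"
    using P unfolding p_subgroup_def by blast
  then have P_carrier: "P \<subseteq> carrier G"
    by (rule subgroup.subset)
  have normalizer: "subgroup (normalizer G P) G"
    using P_carrier by (rule normalizer_imp_subgroup)
  have "subgroup P (G\<lparr>carrier := normalizer G P\<rparr>)"
    using normal_imp_subgroup[OF subgroup_in_normalizer[OF \<open>subgroup P G\<close>]] .
  then have P_normalizer: "P \<subseteq> normalizer G P"
    using subgroup.subset by fastforce
  have "N <#> P = P"
  proof (rule ccontr)
    assume "N <#> P \<noteq> P"
    then have "P \<subset> N <#> P"
      using subset_set_mult_normal(2)[OF N(1) \<open>subgroup P G\<close>] by blast
    moreover have "p_subgroup G p (N <#> P)"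
      using p_subgroup_set_mult_normal[OF \<open>prime p\<close> N P] .
    ultimately obtain y where y: "y \<in> N <#> P" "y \<notin> P" "y \<in> normalizer G P"
      using p_subgroup_normalizer_grows[OF \<open>prime p\<close> _ \<open>subgroup P G\<close>] by blast
    then obtain n x where nx: "n \<in> N" "x \<in> P" "y = n \<otimes> x"
      unfolding set_mult_def by blast
    have "n \<in> carrier G" "x \<in> carrier G"
      using nx(1,2) N(1) P_carrier normal_imp_subgroup subgroup.subset by blast+
    then have "n = y \<otimes> inv x"
      using nx(3) by (simp add: m_assoc)
    moreover have "y \<otimes> inv x \<in> normalizer G P"
      using subgroup.m_closed[OF normalizer y(3) subgroup.m_inv_closed[OF normalizer]] nx(2)
        P_normalizer by blast
    ultimately have "n \<in> P"
      using normalizer_Int nx(1) by auto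
    then have "n \<otimes> x \<in> P"
      using subgroup.m_closed[OF \<open>subgroup P G\<close>] nx(2) by blast
    then show False
      using y(2) nx(3) by simp
  qed
  then show ?thesis
    using subset_set_mult_normal(1)[OF N(1) \<open>subgroup P G\<close>] by blast
qed

lemma (in group) Op_subset_Bp:
  assumes "finite (carrier G)" and "prime p" and "P \<in> Bp G p"
  shows "Op G p \<subseteq> P"
proof (rule normal_p_subgroup_subset_if_normalizer_Int_subset[OF \<open>prime p\<close>])
  show "Op G p \<lhd> G" "p_subgroup G p (Op G p)"
    using normal_Op p_subgroup_Op is_group assms(1,2) by blast+
  show "p_subgroup G p P"
    using assms(3) unfolding Bp_def Sp_def by blast
  show "normalizer G P \<inter> Op G p \<subseteq> P"
    using normalizer_Int_Op_subset_Bp[OF assms] .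
qed

lemma contractible_orbit_space_Bp:
  assumes "group G" and "finite (carrier G)" and "prime p" and "Op G p \<noteq> {\<one>\<^bsub>G\<^esub>}"
  shows "contractible_space (orbit_space G (Bp G p))"
proof (rule contractible_orbit_space[OF assms(1)])
  interpret group G
    by fact
  have "equivariant_poset_map G (Bp G p) id"
    by (rule equivariant_poset_mapI) simp_all
  moreover have "equivariant_poset_map G (Bp G p) (\<lambda>_. Op G p)"
    using Op_in_Bp[OF assms(2-4)] conj_set_normal[OF normal_Op[OF assms(1-3)]]
    by (intro equivariant_poset_mapI) simp_all
  moreover have "\<forall>P \<in> Bp G p. \<forall>Q \<in> Bp G p. P \<subseteq> Q \<or> Q \<subseteq> P \<longrightarrow> id P \<subseteq> Op G p \<or> Op G p \<subseteq> id P"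
    using Op_subset_Bp[OF assms(2,3)] by simp
  ultimately have "homotopic_with (\<lambda>_. True) (orbit_space G (Bp G p)) (orbit_space G (Bp G p))
      (image (image id)) (image (image (\<lambda>_. Op G p)))"
    by (rule homotopic_with_orbit_space_induced[OF assms(1)])
  then show "homotopic_with (\<lambda>_. True) (orbit_space G (Bp G p)) (orbit_space G (Bp G p))
      id (image (image (\<lambda>_. Op G p)))"
    by simp
qed

theorem proposition5p4:
  fixes G :: "('a, 'b) monoid_scheme" and p :: nat
  assumes "group G" and "finite (carrier G)" and "prime p" and "p dvd order G"
    and "Op G p \<noteq> {\<one>\<^bsub>G\<^esub>}"
  shows "contractible_space (poset_topology (orbit_poset G (Sp G p)) orbit_le)
       \<and> contractible_space (poset_topology (orbit_poset G (Bp G p)) orbit_le)"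
  using contractible_orbit_space_Sp[OF assms(1-3) normal_Op[OF assms(1-3)]
      p_subgroup_Op[OF assms(1-3)] assms(5)]
    contractible_orbit_space_Bp[OF assms(1-3,5)]
  by (rule conjI)

end
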